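(* Consider the algorithm described in the context, suppose it does not terminate finitely, and suppose there is $\sigma_{\min}>0$ with $\sigma_{\min}(J_k)\ge\sigma_{\min}$ for all $k\in\mathbb{N}$. Then for all $k\in\mathbb{N}$, $\tau_{k,\mathrm{trial}}\ge\tau_{\min,\mathrm{trial}}$, where, with $K:=2\kappa_v\kappa_{\nabla c}\big(\kappa_{\nabla f}+\kappa_{\partial r}+\bar\sigma_u\kappa_c\kappa_v\kappa_{\nabla c}\big)$, $$\tau_{\min,\mathrm{trial}}:=\min\Big\{\frac{(1-\sigma_c)\kappa_v\sigma_{\min}^2}{K},\ \frac{(1-\sigma_c)(\sigma_{\min}/\kappa_{\nabla c})^2}{K\alpha_0}\Big\},$$ and consequently $\tau_k\ge\tau_{\min}:=\min\{\tau_0,(1-\epsilon_\tau)\tau_{\min,\mathrm{trial}}\}$ for all $k\in\mathbb{N}$.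
   Context: Problem: $\min_{x\in\mathbb{R}^n} f(x)+r(x)$ subject to $c(x)=0$, where $f:\mathbb{R}^n\to\mathbb{R}$ and $c:\mathbb{R}^n\to\mathbb{R}^m$ ($m\le n$) are continuously differentiable and $r:\mathbb{R}^n\to\mathbb{R}_{\ge 0}$ is convex. Write $g(x)=\nabla f(x)$, $J(x)=\nabla c(x)^T$, and $f_k=f(x_k)$, $g_k=g(x_k)$, $c_k=c(x_k)$, $J_k=J(x_k)$, $r_k=r(x_k)$. All norms are Euclidean (spectral norm for matrices). Merit function: $\Phi_\tau(x)=\tau(f(x)+r(x))+\|c(x)\|_2$. Algorithm: inputs $x_0$, $\alpha_0>0$, $\tau_{-1}>0$; constants $\kappa_v>0$, $\sigma_c,\epsilon_\tau,\xi,\eta\in(0,1)$, $\sigma_u\in(0,1/2]$, $\bar\sigma_u:=\sigma_u+\tfrac12$. For $k=0,1,\dots$: 1. If $J_k^Tc_k\ne0$, compute $v_k$ with $v_k\in\mathrm{Range}(J_k^T)$, $\|v_k\|_2\le\kappa_v\alpha_k\|J_k^Tc_k\|_2$, $\|c_k+J_kv_k\|_2\le\|c_k+J_kv_k^c\|_2$, where $v_k^c=-\beta_k^cJ_k^Tc_k$ with $\beta_k^c$ minimizing $\tfrac12\|c_k-\beta J_kJ_k^Tc_k\|_2^2$ over $0\le\beta\le\kappa_v\alpha_k$. Otherwise set $v_k=0$, and if $c_k\ne0$ terminate. 2. Let $u_k$ be the unique minimizer of $g_k^Tu+\tfrac1{2\alpha_k}\|u\|_2^2+r(x_k+v_k+u)$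 subject to $J_ku=0$; set $s_k=v_k+u_k$. If $s_k=0$, terminate. 3. Let $D_k:=g_k^Ts_k+\bar\sigma_u\|s_k\|_2^2/\alpha_k+r(x_k+s_k)-r_k$; $\tau_{k,\mathrm{trial}}=\infty$ if $D_k\le0$, else $\tau_{k,\mathrm{trial}}=(1-\sigma_c)(\|c_k\|_2-\|c_k+J_kv_k\|_2)/D_k$. Set $\tau_k=\tau_{k-1}$ if $\tau_{k-1}\le\tau_{k,\mathrm{trial}}$, else $\tau_k=\min\{(1-\epsilon_\tau)\tau_{k-1},\tau_{k,\mathrm{trial}}\}$. 4. With $\Delta q_k(s,\tau):=-\tau(g_k^Ts+\tfrac1{2\alpha_k}\|s\|_2^2+r(x_k+s)-r_k)+\|c_k\|_2-\|c_k+J_ks\|_2$: if $\Phi_{\tau_k}(x_k+s_k)\le\Phi_{\tau_k}(x_k)-\eta\Delta q_k(s_k,\tau_k)$ set $x_{k+1}=x_k+s_k$, $\alpha_{k+1}=\alpha_k$; else $x_{k+1}=x_k$, $\alpha_{k+1}=\xi\alpha_k$. Standing assumption: there is an open convex set $\mathcal X$ containing all iterates $x_k$ and trial points $x_k+s_k$, and positive constants such that for all $x\in\mathcal X$: $f$ is bounded below, $\|\nabla f(x)\|_2\le\kappa_{\nabla f}$, $\|c(x)\|_2\le\kappa_c$, $\|J(x)\|_2\le\kappa_{\nabla c}$, every $w\in\partial r(x)$ has $\|w\|_2\le\kappa_{\partial r}$; and $\nabla f$, $J$ are Lipschitz continuous on $\mathcal X$. *)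

theory Defs
  imports "HOL-Analysis.Analysis"
begin

definition subdiff :: "('a::real_inner \<Rightarrow> real) \<Rightarrow> 'a \<Rightarrow> 'a set" where
  "subdiff r x = {w. \<forall>y. r x + inner w (y - x) \<le> r y}"

definition spec_norm :: "real^'n^'m \<Rightarrow> real" where
  "spec_norm A = onorm (\<lambda>h. A *v h)"

text \<open>Smallest singular value of an m x n matrix A with m \<le> n, i.e. the square root of
  the smallest eigenvalue of A A^T, written variationally as min over unit y of norm (A^T y).\<close>
definition sigma_min_sv :: "real^'n^'m \<Rightarrow> real" where
  "sigma_min_sv A = Inf {norm (transpose A *v y) | y. norm y = 1}"

definition merit :: "(real^'n \<Rightarrow> real) \<Rightarrow> (real^'n \<Rightarrow> real) \<Rightarrow> (real^'n \<Rightarrow> real^'m)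
    \<Rightarrow> real \<Rightarrow> real^'n \<Rightarrow> real" where
  "merit f r c tau x = tau * (f x + r x) + norm (c x)"

definition Dval :: "real^'n \<Rightarrow> (real^'n \<Rightarrow> real) \<Rightarrow> real \<Rightarrow> real \<Rightarrow> real^'n \<Rightarrow> real^'n \<Rightarrow> real" where
  "Dval gk r sbar alpha xk s = inner gk s + sbar * (norm s)^2 / alpha + r (xk + s) - r xk"

definition tau_trial_val :: "real \<Rightarrow> real^'m \<Rightarrow> real^'n^'m \<Rightarrow> real^'n \<Rightarrow> real \<Rightarrow> ereal" where
  "tau_trial_val sigc ck Jk vk D =
     (if D \<le> 0 then \<infinity> else ereal ((1 - sigc) * (norm ck - norm (ck + Jk *v vk)) / D))"

definition dq :: "real^'n \<Rightarrow> (real^'n \<Rightarrow> real) \<Rightarrow> real \<Rightarrow> real^'n \<Rightarrow> real^'m \<Rightarrow> real^'n^'m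
    \<Rightarrow> real^'n \<Rightarrow> real \<Rightarrow> real" where
  "dq gk r alpha xk ck Jk s tau =
     - tau * (inner gk s + (norm s)^2 / (2 * alpha) + r (xk + s) - r xk)
     + norm ck - norm (ck + Jk *v s)"

end

theory Submission
  imports Defs
begin

(* The normal step achieves a Cauchy-type decrease of the constraint violation,
     norm c - norm (c + J v) >= norm (J^T c)^2 * min (1 / kJ^2) (kv * alpha) / (2 * norm c),
   while testing the optimality of the tangential step u against the shorter feasible steps
   (1 - t) u, together with the bound kr on subgradients, gives
     D <= (kf + kr) * norm v + sb * norm v^2 / alpha,
   which is O(alpha * norm (J^T c)) since norm v <= kv * alpha * norm (J^T c).  As
   norm (J^T c) >= smin * norm c and alpha_k <= alpha_0, the quotient defining tau_trial is bounded
   below uniformly in k, and each decrease of the merit parameter keeps it above (1 - epst) times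
   a trial value. *)

lemma convex_on_epigraph_separation:
  fixes r :: "'a::euclidean_space \<Rightarrow> real"
  assumes cv: "convex_on UNIV r"
  obtains a a0 b where "(a, a0) \<noteq> 0"
    and "\<And>y t. r y \<le> t \<Longrightarrow> inner a y + a0 * t \<le> b"
    and "\<And>t. t < r p \<Longrightarrow> b \<le> inner a p + a0 * t"
proof -
  define S where "S = {z::'a \<times> real. r (fst z) \<le> snd z}"
  define T where "T = {z::'a \<times> real. fst z = p \<and> snd z < r p}"
  have "convex S"
    using convex_epigraphI[OF cv] unfolding S_def epigraph_def by simp
  moreover have "convex T"
  proof (rule convexI)
    fix z z' :: "'a \<times> real" and s s' :: real
    assume h: "z \<in> T" "z' \<in> T" "0 \<le> s" "0 \<le> s'" "s + s' = 1"
    then have "s *\<^sub>R fst z + s' *\<^sub>R fst z' = p"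
      by (simp add: T_def scaleR_left_distrib[symmetric])
    moreover have "s * snd z + s' * snd z' < r p"
      using h convex_bound_lt[of "snd z" "r p" "snd z'" s s'] by (simp add: T_def)
    ultimately show "s *\<^sub>R z + s' *\<^sub>R z' \<in> T" by (simp add: T_def)
  qed
  moreover have "(p, r p) \<in> S" "(p, r p - 1) \<in> T" "S \<inter> T = {}"
    unfolding S_def T_def by auto
  ultimately obtain z b where "z \<noteq> 0"
    and S_sep: "\<forall>z'\<in>S. inner z z' \<le> b" and T_sep: "\<forall>z'\<in>T. b \<le> inner z z'"
    using separating_hyperplane_sets[of S T] by blast
  obtain a a0 where z: "z = (a, a0)" by (cases z)
  show thesis
  proof (rule that)
    show "(a, a0) \<noteq> 0"
      using \<open>z \<noteq> 0\<close> z by simp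
    show "inner a y + a0 * t \<le> b" if "r y \<le> t" for y t
      using S_sep that unfolding S_def z by auto
    show "b \<le> inner a p + a0 * t" if "t < r p" for t
      using T_sep that unfolding T_def z by auto
  qed
qed

lemma subdiff_nonempty:
  fixes r :: "'a::euclidean_space \<Rightarrow> real"
  assumes cv: "convex_on UNIV r"
  shows "subdiff r p \<noteq> {}"
proof -
  obtain a a0 b where nz: "(a, a0) \<noteq> 0"
    and S_le: "\<And>y t. r y \<le> t \<Longrightarrow> inner a y + a0 * t \<le> b"
    and T_ge: "\<And>t. t < r p \<Longrightarrow> b \<le> inner a p + a0 * t"
    using convex_on_epigraph_separation[OF cv, where p = p] by blast
  \<comment> \<open>The hyperplane is not vertical because the epigraph lies over the whole space; its slope
      is then a subgradient.\<close>
  have "a0 \<le> 0"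
    using S_le[of p "r p"] T_ge[of "r p - 1"] by (simp add: algebra_simps)
  moreover have "a0 \<noteq> 0"
  proof
    assume a0: "a0 = 0"
    have "inner a (p + a) \<le> inner a p"
      using S_le[of "p + a" "r (p + a)"] T_ge[of "r p - 1"] a0 by simp
    then have "inner a a \<le> 0" by (simp add: inner_add_right)
    then have "a = 0" by (meson inner_gt_zero_iff not_le)
    with a0 nz show False by (simp add: zero_prod_def)
  qed
  ultimately have a0_neg: "a0 < 0" by simp
  have support: "inner a y + a0 * r y \<le> inner a p + a0 * r p" for y
  proof (rule field_le_epsilon)
    fix e :: real
    assume "e > 0"
    then have "0 < e / (- a0)"
      using a0_neg by (simp add: divide_pos_neg)
    then have "inner a y + a0 * r y \<le> inner a p + a0 * (r p - e / (- a0))"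
      using S_le[of y "r y"] T_ge[of "r p - e / (- a0)"] by simp
    also have "\<dots> = inner a p + a0 * r p + e"
      using a0_neg by (simp add: field_simps)
    finally show "inner a y + a0 * r y \<le> inner a p + a0 * r p + e" .
  qed
  have "r p + inner ((- 1 / a0) *\<^sub>R a) (y - p) \<le> r y" for y
  proof -
    have "a0 * (r p + inner ((- 1 / a0) *\<^sub>R a) (y - p)) = a0 * r p - inner a y + inner a p"
      using a0_neg by (simp add: inner_diff_right field_simps)
    then have "a0 * r y \<le> a0 * (r p + inner ((- 1 / a0) *\<^sub>R a) (y - p))"
      using support[of y] by linarith
    then show ?thesis
      using a0_neg by (simp add: mult_le_cancel_left)
  qed
  then have "(- 1 / a0) *\<^sub>R a \<in> subdiff r p"
    by (simp add: subdiff_def)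
  then show ?thesis by blast
qed

lemma subdiff_norm_le_imp_le:
  assumes "w \<in> subdiff r q" and "norm w \<le> k"
  shows "r q \<le> r y + k * norm (q - y)"
proof -
  have "r q + inner w (y - q) \<le> r y"
    using assms(1) by (simp add: subdiff_def)
  moreover have "inner w (q - y) \<le> k * norm (q - y)"
    using norm_cauchy_schwarz[of w "q - y"] assms(2) by (meson mult_right_mono norm_ge_zero order_trans)
  moreover have "inner w (y - q) = - inner w (q - y)"
    by (simp add: inner_diff_right)
  ultimately show ?thesis by linarith
qed

lemma le_if_le_add_mult_small:
  fixes a b d t0 :: real
  assumes "0 < t0" and "\<And>t. 0 < t \<Longrightarrow> t < t0 \<Longrightarrow> d \<le> a + t * b"
  shows "d \<le> a"
proof (rule tendsto_lowerbound)
  show "((\<lambda>t. a + t * b) \<longlongrightarrow> a) (at_right 0)"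
    by (auto intro!: tendsto_eq_intros)
  show "\<forall>\<^sub>F t in at_right 0. d \<le> a + t * b"
    using eventually_at_right_real[OF assms(1)] by eventually_elim (auto intro: assms(2))
qed simp

lemma tangential_minimizer_decrease:
  fixes r :: "'a::euclidean_space \<Rightarrow> real"
  assumes cv: "convex_on UNIV r" and X: "open X" "x + v + u \<in> X" and alpha: "0 < alpha"
    and subdiff_bd: "\<And>y w. y \<in> X \<Longrightarrow> w \<in> subdiff r y \<Longrightarrow> norm w \<le> kr"
    and S: "subspace S" "u \<in> S"
    and opt: "\<And>w. w \<in> S \<Longrightarrow> inner g u + (norm u)^2 / (2 * alpha) + r (x + v + u)
                                 \<le> inner g w + (norm w)^2 / (2 * alpha) + r (x + v + w)"
  shows "r (x + v + u) - r x \<le> kr * norm v - inner g u - (norm u)^2 / alpha"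
proof -
  define p where "p = x + v + u"
  define Q where "Q = (norm u)^2 / (2 * alpha)"
  obtain e where e: "0 < e" "ball p e \<subseteq> X"
    using X open_contains_ball unfolding p_def by blast
  define t0 where "t0 = min 1 (e / (norm u + 1))"
  \<comment> \<open>Compare u with the feasible step (1 - t) u, then let t tend to 0.\<close>
  have "r p - r x \<le> kr * norm v - inner g u - 2 * Q + t * Q" if t: "0 < t" "t < t0" for t
  proof -
    define q where "q = x + v + (1 - t) *\<^sub>R u"
    have "t * norm u < e"
    proof -
      have "t * norm u \<le> e / (norm u + 1) * norm u"
        using t by (intro mult_right_mono) (auto simp: t0_def)
      also have "\<dots> < e"
      proof -
        have "0 < norm u + 1"
          using norm_ge_zero[of u] by linarith
        then show ?thesis
          using e by (simp add: field_simps)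
      qed
      finally show ?thesis .
    qed
    then have "q \<in> X"
      using e t by (auto simp: p_def q_def dist_norm algebra_simps)
    obtain w where w: "w \<in> subdiff r q"
      using subdiff_nonempty[OF cv] by blast
    have "q - ((1 - t) *\<^sub>R p + t *\<^sub>R x) = t *\<^sub>R v"
      by (simp add: p_def q_def algebra_simps)
    then have "r q \<le> r ((1 - t) *\<^sub>R p + t *\<^sub>R x) + kr * norm (t *\<^sub>R v)"
      using subdiff_norm_le_imp_le[OF w subdiff_bd[OF \<open>q \<in> X\<close> w]] by metis
    also have "\<dots> \<le> (1 - t) * r p + t * r x + t * (kr * norm v)"
      using convex_onD[OF cv, of t p x] t by (simp add: t0_def)
    finally have q_le: "r q \<le> (1 - t) * r p + t * r x + t * (kr * norm v)" .
    have "inner g u + Q + r p \<le> (1 - t) * inner g u + (1 - t)^2 * Q + r q"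
      using opt[OF subspace_mul[OF S, of "1 - t"]] t
      by (simp add: p_def q_def Q_def power_mult_distrib)
    with q_le have "t * (r p - r x) \<le> t * (kr * norm v - inner g u - 2 * Q + t * Q)"
      by (simp add: algebra_simps power2_eq_square)
    then show ?thesis
      using t by simp
  qed
  moreover have "0 < t0"
    using e by (auto simp: t0_def intro!: divide_pos_pos add_nonneg_pos)
  ultimately have "r p - r x \<le> kr * norm v - inner g u - 2 * Q"
    using le_if_le_add_mult_small by blast
  then show ?thesis
    using alpha by (simp add: p_def Q_def)
qed

lemma Dval_le_normal_part:
  fixes r :: "real^'n \<Rightarrow> real"
  assumes cv: "convex_on UNIV r" and X: "open X" "x + (v + u) \<in> X"
    and alpha: "0 < alpha" and sb: "sb \<le> 1"
    and subdiff_bd: "\<And>y w. y \<in> X \<Longrightarrow> w \<in> subdiff r y \<Longrightarrow> norm w \<le> kr"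
    and S: "subspace S" "u \<in> S"
    and opt: "\<And>w. w \<in> S \<Longrightarrow> inner g u + (norm u)^2 / (2 * alpha) + r (x + v + u)
                                 \<le> inner g w + (norm w)^2 / (2 * alpha) + r (x + v + w)"
    and orth: "inner v u = 0" and g: "norm g \<le> kf"
  shows "Dval g r sb alpha x (v + u) \<le> (kf + kr) * norm v + sb * (norm v)^2 / alpha"
proof -
  have decrease: "r (x + v + u) - r x \<le> kr * norm v - inner g u - (norm u)^2 / alpha"
    using X by (intro tangential_minimizer_decrease[OF cv X(1) _ alpha subdiff_bd S opt])
      (simp_all add: add.assoc)
  have "(norm (v + u))^2 = (norm v)^2 + (norm u)^2"
    using orth by (simp add: power2_norm_eq_inner inner_add_left inner_add_right inner_commute)
  then have "Dval g r sb alpha x (v + u)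
      = inner g v + inner g u + sb * (norm v)^2 / alpha + sb * (norm u)^2 / alpha
        + (r (x + v + u) - r x)"
    by (simp add: Dval_def inner_add_right add_divide_distrib add.assoc algebra_simps)
  also have "\<dots> \<le> inner g v + kr * norm v + sb * (norm v)^2 / alpha"
    using decrease divide_right_mono[OF mult_right_mono[OF sb], of "(norm u)^2" alpha] alpha
    by simp
  also have "inner g v \<le> kf * norm v"
    using norm_cauchy_schwarz[of g v] g by (meson mult_right_mono norm_ge_zero order_trans)
  finally show ?thesis
    by (simp add: algebra_simps)
qed

lemma inner_transpose_mult:
  fixes A :: "real^'n^'m"
  shows "inner (transpose A *v y) z = inner y (A *v z)"
  by (metis dot_lmul_matrix transpose_transpose vector_transpose_matrix)

lemma norm_mult_le_spec_norm:
  fixes A :: "real^'n^'m"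
  shows "norm (A *v h) \<le> spec_norm A * norm h"
  unfolding spec_norm_def by (rule onorm) simp

lemma norm_transpose_mult_le_spec_norm:
  fixes A :: "real^'n^'m"
  shows "norm (transpose A *v y) \<le> spec_norm A * norm y"
proof -
  define z where "z = transpose A *v y"
  have "(norm z)^2 = inner y (A *v z)"
    unfolding z_def power2_norm_eq_inner by (rule inner_transpose_mult)
  also have "\<dots> \<le> norm y * (spec_norm A * norm z)"
    using norm_cauchy_schwarz[of y "A *v z"] norm_mult_le_spec_norm[of A z]
    by (meson mult_left_mono norm_ge_zero order_trans)
  finally have le: "norm z * norm z \<le> (spec_norm A * norm y) * norm z"
    by (simp only: power2_eq_square mult_ac)
  have "0 \<le> spec_norm A"
    unfolding spec_norm_def by (rule onorm_pos_le) simp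
  show ?thesis
    unfolding z_def[symmetric]
  proof (cases "z = 0")
    case True
    then show "norm z \<le> spec_norm A * norm y"
      using \<open>0 \<le> spec_norm A\<close> by simp
  next
    case False
    then show "norm z \<le> spec_norm A * norm y"
      using mult_right_le_imp_le[OF le] by simp
  qed
qed

lemma sigma_min_sv_mult_le:
  fixes A :: "real^'n^'m"
  shows "sigma_min_sv A * norm y \<le> norm (transpose A *v y)"
proof (cases "y = 0")
  case False
  have "sigma_min_sv A \<le> norm (transpose A *v ((1 / norm y) *\<^sub>R y))"
    unfolding sigma_min_sv_def
    by (rule cInf_lower) (use False in \<open>auto intro: bdd_belowI[of _ 0]\<close>)
  also have "\<dots> = norm (transpose A *v y) / norm y"
    by (simp add: matrix_vector_mult_scaleR)
  finally show ?thesis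
    using False by (simp add: pos_le_divide_eq)
qed simp

lemma sigma_min_sv_le_spec_norm:
  fixes A :: "real^'n^'m"
  shows "sigma_min_sv A \<le> spec_norm A"
  using sigma_min_sv_mult_le[of A "axis undefined 1"]
    norm_transpose_mult_le_spec_norm[of A "axis undefined 1"]
  by simp

lemma norm_diff_scaleR_sq_le:
  fixes c w :: "'a::real_inner"
  assumes "0 \<le> beta" and "beta * (norm w)^2 \<le> inner c w"
  shows "(norm (c - beta *\<^sub>R w))^2 \<le> (norm c)^2 - beta * inner c w"
proof -
  have "(norm (c - beta *\<^sub>R w))^2 = inner c c - 2 * beta * inner c w + beta * (beta * inner w w)"
    unfolding power2_norm_eq_inner
    by (simp add: inner_diff_left inner_diff_right inner_commute[of w c] algebra_simps)
  also have "beta * (beta * inner w w) \<le> beta * inner c w"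
    using assms unfolding power2_norm_eq_inner by (rule mult_left_mono[rotated])
  finally show ?thesis
    unfolding power2_norm_eq_inner by simp
qed

lemma diff_ge_of_sq_le_sq_diff:
  fixes n p d :: real
  assumes "0 \<le> p" "0 < n" "0 \<le> d" "p^2 \<le> n^2 - d"
  shows "d / (2 * n) \<le> n - p"
proof -
  have "p^2 \<le> n^2"
    using assms(3,4) by linarith
  then have "p \<le> n"
    using power2_le_imp_le assms(2) by fastforce
  have "d \<le> (n - p) * (n + p)"
    using assms(4) by (simp add: power2_eq_square algebra_simps)
  also have "\<dots> \<le> (n - p) * (2 * n)"
    using \<open>p \<le> n\<close> by (intro mult_left_mono) auto
  finally have "d \<le> (n - p) * (2 * n)" .
  then show ?thesis
    using assms(2) by (simp add: divide_le_eq)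
qed

lemma normal_step_decrease_ge:
  fixes J :: "real^'n^'m" and c :: "real^'m"
  assumes jc: "transpose J *v c \<noteq> 0" and J: "spec_norm J \<le> kJ" "0 < kJ"
    and B: "0 < B" and bc: "0 \<le> bc" "bc \<le> B"
    and bc_min: "\<forall>b. 0 \<le> b \<and> b \<le> B \<longrightarrow>
        (1/2) * (norm (c - bc *\<^sub>R (J *v (transpose J *v c))))^2
        \<le> (1/2) * (norm (c - b *\<^sub>R (J *v (transpose J *v c))))^2"
    and v: "norm (c + J *v v) \<le> norm (c + J *v (- (bc *\<^sub>R (transpose J *v c))))"
  shows "(norm (transpose J *v c))^2 * min (1 / kJ^2) B / (2 * norm c) \<le> norm c - norm (c + J *v v)"
proof -
  define a where "a = norm (transpose J *v c)"
  define w where "w = J *v (transpose J *v c)"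
  define beta where "beta = min (1 / kJ^2) B"
  \<comment> \<open>An admissible step length in the Cauchy-point problem, short enough for the quadratic
      term to be dominated by the linear one.\<close>
  have beta: "0 \<le> beta" "beta \<le> B" "beta * kJ^2 \<le> 1"
    using B J(2) by (auto simp: beta_def min_def field_simps)
  have cw: "inner c w = a^2"
    using inner_transpose_mult[of J c "transpose J *v c"]
    by (simp add: a_def w_def power2_norm_eq_inner)
  have "norm w \<le> kJ * a"
    using norm_mult_le_spec_norm[of J "transpose J *v c"] J(1) unfolding w_def a_def
    by (meson mult_right_mono norm_ge_zero order_trans)
  then have "beta * (norm w)^2 \<le> beta * (kJ * a)^2"
    using beta(1) by (intro mult_left_mono power_mono) auto
  also have "\<dots> \<le> a^2"
    using mult_right_mono[OF beta(3), of "a^2"] by (simp add: power_mult_distrib mult.assoc)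
  finally have cauchy: "beta * (norm w)^2 \<le> inner c w"
    using cw by simp
  have "c + J *v (- (bc *\<^sub>R (transpose J *v c))) = c - bc *\<^sub>R w"
    by (simp add: w_def linear_neg[OF matrix_vector_mul_linear] matrix_vector_mult_scaleR)
  then have "(norm (c + J *v v))^2 \<le> (norm (c - bc *\<^sub>R w))^2"
    using v by (simp add: power_mono)
  also have "\<dots> \<le> (norm (c - beta *\<^sub>R w))^2"
    using bc_min beta unfolding w_def by auto
  also have "\<dots> \<le> (norm c)^2 - beta * a^2"
    using norm_diff_scaleR_sq_le[OF beta(1) cauchy] cw by simp
  finally have "a^2 * beta / (2 * norm c) \<le> norm c - norm (c + J *v v)"
    using jc beta(1) by (intro diff_ge_of_sq_le_sq_diff) (auto simp: mult.commute)
  then show ?thesis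
    by (simp add: a_def beta_def)
qed

definition tau_trial_min :: "real \<Rightarrow> real \<Rightarrow> real \<Rightarrow> real \<Rightarrow> real \<Rightarrow> real \<Rightarrow> real \<Rightarrow> real \<Rightarrow> real \<Rightarrow> real"
  where "tau_trial_min sigc kv kf kr kc kJ sb smin alpha0 =
    (let K = 2 * kv * kJ * (kf + kr + sb * kc * kv * kJ)
     in min ((1 - sigc) * kv * smin^2 / K) ((1 - sigc) * (smin / kJ)^2 / (K * alpha0)))"

lemma tau_trial_min_pos:
  assumes "0 < kv" "0 < kf" "0 < kr" "0 < kc" "0 < kJ" "0 < sb" "sigc < 1" "0 < smin" "0 < alpha0"
  shows "0 < tau_trial_min sigc kv kf kr kc kJ sb smin alpha0"
proof -
  have "0 < kf + kr + sb * kc * kv * kJ"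
    using assms by (simp add: add_pos_pos)
  then show ?thesis
    unfolding tau_trial_min_def Let_def min_less_iff_conj
    using assms by (auto intro!: divide_pos_pos mult_pos_pos)
qed

lemma tau_trial_min_le_at_step_size:
  assumes pos: "0 < kv" "0 < kf" "0 < kr" "0 < kc" "0 < kJ" "0 < sb" "sigc < 1"
    and smin: "0 < smin" "smin \<le> kJ" and alpha: "0 < alpha" "alpha \<le> alpha0"
  shows "tau_trial_min sigc kv kf kr kc kJ sb smin alpha0
    \<le> (1 - sigc) * (smin * min (1 / kJ^2) (kv * alpha) / (2 * kv * alpha * (kf + kr + sb * kc * kv * kJ)))"
proof -
  define M where "M = kf + kr + sb * kc * kv * kJ"
  have M: "0 < M"
    using pos unfolding M_def by (simp add: add_pos_pos)
  have "tau_trial_min sigc kv kf kr kc kJ sb smin alpha0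
    \<le> (1 - sigc) * (smin * min (1 / kJ^2) (kv * alpha) / (2 * kv * alpha * M))"
  proof (cases "kv * alpha \<le> 1 / kJ^2")
    case True
    then have "(1 - sigc) * kv * smin^2 / (2 * kv * kJ * M)
        = (1 - sigc) * (smin * min (1 / kJ^2) (kv * alpha) / (2 * kv * alpha * M)) * (smin / kJ)"
      using pos alpha M by (simp add: field_simps power2_eq_square)
    also have "\<dots> \<le> (1 - sigc) * (smin * min (1 / kJ^2) (kv * alpha) / (2 * kv * alpha * M))"
      using pos smin alpha M True by (intro mult_left_le) auto
    finally show ?thesis
      unfolding tau_trial_min_def Let_def M_def by (simp add: min.coboundedI1)
  next
    case False
    have "(1 - sigc) * (smin / kJ)^2 / (2 * kv * kJ * M * alpha0)
        = (1 - sigc) * (smin / (2 * kv * kJ^2 * M * alpha0)) * (smin / kJ)"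
      using pos alpha M by (simp add: field_simps power2_eq_square)
    also have "\<dots> \<le> (1 - sigc) * (smin / (2 * kv * kJ^2 * M * alpha0))"
      using pos smin alpha M by (intro mult_left_le) auto
    also have "\<dots> \<le> (1 - sigc) * (smin / (2 * kv * kJ^2 * M * alpha))"
      using pos smin alpha M by (intro mult_left_mono divide_left_mono) auto
    also have "\<dots> = (1 - sigc) * (smin * min (1 / kJ^2) (kv * alpha) / (2 * kv * alpha * M))"
      using pos alpha M False by (simp add: field_simps)
    finally show ?thesis
      unfolding tau_trial_min_def Let_def M_def by (simp add: min.coboundedI2)
  qed
  then show ?thesis
    unfolding M_def .
qed

lemma normal_part_le:
  fixes nv a :: real
  assumes "0 \<le> nv" "nv \<le> kv * alpha * a" "a \<le> kJ * kc" "0 < alpha" "0 \<le> sb" "0 \<le> kv"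
    and "0 \<le> kf + kr + sb * kc * kv * kJ"
  shows "(kf + kr) * nv + sb * nv^2 / alpha \<le> kv * alpha * a * (kf + kr + sb * kc * kv * kJ)"
proof -
  have "kv * alpha * a \<le> kv * alpha * (kJ * kc)"
    using assms(3,4,6) by (intro mult_left_mono) auto
  with assms(2) have "nv \<le> kv * alpha * (kJ * kc)"
    by linarith
  with assms(4) have "nv / alpha \<le> kv * (kJ * kc)"
    by (simp add: divide_le_eq mult_ac)
  then have "sb * nv * (nv / alpha) \<le> sb * nv * (kv * (kJ * kc))"
    using assms by (intro mult_left_mono) auto
  then have "(kf + kr) * nv + sb * nv^2 / alpha \<le> nv * (kf + kr + sb * kc * kv * kJ)"
    by (simp add: power2_eq_square algebra_simps)
  also have "\<dots> \<le> kv * alpha * a * (kf + kr + sb * kc * kv * kJ)"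
    using mult_right_mono[OF assms(2) assms(7)] .
  finally show ?thesis .
qed

lemma tau_trial_min_le_ratio:
  fixes a nc D N :: real
  assumes pos: "0 < kv" "0 < kf" "0 < kr" "0 < kc" "0 < kJ" "0 < sb" "sigc < 1"
    and smin: "0 < smin" "smin \<le> kJ" and alpha: "0 < alpha" "alpha \<le> alpha0"
    and a: "0 < nc" "smin * nc \<le> a"
    and D: "0 < D" "D \<le> kv * alpha * a * (kf + kr + sb * kc * kv * kJ)"
    and N: "a^2 * min (1 / kJ^2) (kv * alpha) / (2 * nc) \<le> N"
  shows "tau_trial_min sigc kv kf kr kc kJ sb smin alpha0 \<le> (1 - sigc) * N / D"
proof -
  define M where "M = kf + kr + sb * kc * kv * kJ"
  define m where "m = min (1 / kJ^2) (kv * alpha)"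
  have M: "0 < M" and m: "0 < m" and a_pos: "0 < a"
    using pos alpha smin a unfolding M_def m_def
    by (simp_all add: add_pos_pos) (smt (verit) mult_pos_pos)
  have "0 \<le> a^2 * m / (2 * nc)"
    using m a(1) by simp
  then have N_nonneg: "0 \<le> N"
    using N unfolding m_def by linarith
  have "smin * m / (2 * kv * alpha * M) \<le> a / nc * (m / (2 * kv * alpha * M))"
    using a m M pos alpha by (simp add: pos_le_divide_eq mult_right_mono)
  also have "\<dots> = (a^2 * m / (2 * nc)) / (kv * alpha * a * M)"
    using a_pos pos alpha M by (simp add: field_simps power2_eq_square)
  also have "\<dots> \<le> N / (kv * alpha * a * M)"
    using N pos alpha a_pos M by (intro divide_right_mono) (simp_all add: m_def)
  also have "\<dots> \<le> N / D"
    using D N_nonneg a_pos by (intro divide_left_mono) (simp_all add: M_def)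
  finally have "(1 - sigc) * (smin * m / (2 * kv * alpha * M)) \<le> (1 - sigc) * (N / D)"
    using pos by (intro mult_left_mono) auto
  with tau_trial_min_le_at_step_size[OF pos smin alpha] show ?thesis
    unfolding M_def m_def by simp
qed

lemma tau_trial_min_le_tau_trial_val:
  fixes r :: "real^'n \<Rightarrow> real" and J :: "real^'n^'m" and c :: "real^'m" and g x v u :: "real^'n"
  assumes cv: "convex_on UNIV r" and X: "open X" "x + (v + u) \<in> X"
    and subdiff_bd: "\<And>y w. y \<in> X \<Longrightarrow> w \<in> subdiff r y \<Longrightarrow> norm w \<le> kr"
    and pos: "0 < kv" "0 < kf" "0 < kr" "0 < kc" "0 < kJ" "0 < sb" "sb \<le> 1" "sigc < 1"
    and alpha: "0 < alpha" "alpha \<le> alpha0"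
    and g: "norm g \<le> kf" and c: "norm c \<le> kc" and J: "spec_norm J \<le> kJ"
    and smin: "0 < smin" "smin \<le> sigma_min_sv J"
    and normal: "transpose J *v c \<noteq> 0 \<Longrightarrow>
         (\<exists>y. v = transpose J *v y)
       \<and> norm v \<le> kv * alpha * norm (transpose J *v c)
       \<and> (\<exists>bc. 0 \<le> bc \<and> bc \<le> kv * alpha
            \<and> (\<forall>b. 0 \<le> b \<and> b \<le> kv * alpha \<longrightarrow>
                 (1/2) * (norm (c - bc *\<^sub>R (J *v (transpose J *v c))))^2
                 \<le> (1/2) * (norm (c - b *\<^sub>R (J *v (transpose J *v c))))^2)
            \<and> norm (c + J *v v) \<le> norm (c + J *v (- (bc *\<^sub>R (transpose J *v c)))))"
    and normal_zero: "transpose J *v c = 0 \<Longrightarrow> v = 0"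
    and tangential: "J *v u = 0"
      "\<forall>w. J *v w = 0 \<longrightarrow>
         inner g u + (norm u)^2 / (2 * alpha) + r (x + v + u)
         \<le> inner g w + (norm w)^2 / (2 * alpha) + r (x + v + w)"
  shows "ereal (tau_trial_min sigc kv kf kr kc kJ sb smin alpha0)
           \<le> tau_trial_val sigc c J v (Dval g r sb alpha x (v + u))"
proof -
  define D where "D = Dval g r sb alpha x (v + u)"
  define a where "a = norm (transpose J *v c)"
  obtain y where "v = transpose J *v y"
    using normal normal_zero by (metis matrix_vector_mult_0_right)
  then have "inner v u = 0"
    using inner_transpose_mult[of J y u] tangential(1) by simp
  then have D_le: "D \<le> (kf + kr) * norm v + sb * (norm v)^2 / alpha"
    unfolding D_def
    using tangential X by (intro Dval_le_normal_part[OF cv X(1) _ alpha(1) pos(7) subdiff_bd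
        linear_subspace_kernel[OF matrix_vector_mul_linear] _ _ _ g]) auto
  show ?thesis
  proof (cases "D \<le> 0")
    case True
    then show ?thesis
      by (simp add: tau_trial_val_def D_def[symmetric])
  next
    case False
    then have jc: "transpose J *v c \<noteq> 0"
      using D_le normal_zero by force
    then obtain bc where v_le: "norm v \<le> kv * alpha * a"
      and bc: "0 \<le> bc" "bc \<le> kv * alpha"
      and bc_min: "\<forall>b. 0 \<le> b \<and> b \<le> kv * alpha \<longrightarrow>
                 (1/2) * (norm (c - bc *\<^sub>R (J *v (transpose J *v c))))^2
                 \<le> (1/2) * (norm (c - b *\<^sub>R (J *v (transpose J *v c))))^2"
      and v_decr: "norm (c + J *v v) \<le> norm (c + J *v (- (bc *\<^sub>R (transpose J *v c))))"
      using normal unfolding a_def by blast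
    have a_le: "a \<le> kJ * kc"
      using norm_transpose_mult_le_spec_norm[of J c] J c pos unfolding a_def
      by (meson mult_mono norm_ge_zero order_trans less_imp_le)
    have M: "0 \<le> kf + kr + sb * kc * kv * kJ"
      using pos by (intro add_nonneg_nonneg mult_nonneg_nonneg) auto
    have D_bound: "D \<le> kv * alpha * a * (kf + kr + sb * kc * kv * kJ)"
      using D_le normal_part_le[OF norm_ge_zero v_le a_le alpha(1) less_imp_le[OF pos(6)]
          less_imp_le[OF pos(1)] M] by linarith
    have "smin * norm c \<le> a"
      using sigma_min_sv_mult_le[of J c] smin(2) unfolding a_def
      by (meson mult_right_mono norm_ge_zero order_trans)
    moreover have "smin \<le> kJ"
      using sigma_min_sv_le_spec_norm[of J] smin J by linarith
    moreover have "0 < norm c"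
      using jc by auto
    moreover have "a^2 * min (1 / kJ^2) (kv * alpha) / (2 * norm c) \<le> norm c - norm (c + J *v v)"
      unfolding a_def
      using normal_step_decrease_ge[OF jc J pos(5) _ bc bc_min v_decr] pos alpha by simp
    ultimately have "tau_trial_min sigc kv kf kr kc kJ sb smin alpha0
        \<le> (1 - sigc) * (norm c - norm (c + J *v v)) / D"
      using False by (intro tau_trial_min_le_ratio[OF pos(1-6,8) smin(1) _ alpha _ _ _ D_bound]) auto
    then show ?thesis
      using False by (simp add: tau_trial_val_def D_def[symmetric])
  qed
qed

lemma merit_parameter_ge:
  fixes tau :: "nat \<Rightarrow> real" and T :: "nat \<Rightarrow> ereal"
  assumes update: "\<And>k. tau (Suc k) = (if ereal (tau k) \<le> T (Suc k) then tau k
                        else min ((1 - epst) * tau k) (real_of_ereal (T (Suc k))))"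
    and T: "\<And>k. ereal tmin \<le> T k" and "0 \<le> tmin" "0 \<le> epst" "epst \<le> 1"
  shows "min (tau 0) ((1 - epst) * tmin) \<le> tau k"
proof (induction k)
  case (Suc k)
  show ?case
  proof (cases "ereal (tau k) \<le> T (Suc k)")
    case True
    then show ?thesis
      using update[of k] Suc by simp
  next
    case False
    then obtain t where t: "T (Suc k) = ereal t" "t < tau k"
      using T[of "Suc k"] by (cases "T (Suc k)") auto
    then have "tmin \<le> t"
      using T[of "Suc k"] by simp
    moreover have "(1 - epst) * tmin \<le> tmin"
      using assms(3-5) by (intro mult_left_le_one_le) auto
    moreover have "(1 - epst) * tmin \<le> (1 - epst) * tau k"
      using \<open>tmin \<le> t\<close> t(2) assms(5) by (intro mult_left_mono) auto
    ultimately show ?thesis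
      using update[of k] False t by (simp add: min.coboundedI2)
  qed
qed simp

lemma step_sizes_pos_le_initial:
  fixes alpha :: "nat \<Rightarrow> real"
  assumes "0 < alpha 0" "0 < xi" "xi \<le> 1"
    and "\<And>k. alpha (Suc k) = alpha k \<or> alpha (Suc k) = xi * alpha k"
  shows "0 < alpha k \<and> alpha k \<le> alpha 0"
proof (induction k)
  case (Suc k)
  have "xi * alpha k \<le> alpha k"
    using Suc assms(2,3) by (intro mult_left_le_one_le) auto
  then show ?case
    using Suc assms(2) assms(4)[of k] by (metis mult_pos_pos order_trans)
qed (use assms(1) in simp)

theorem lemma3p13:
  fixes f r :: "real^'n \<Rightarrow> real"
    and g :: "real^'n \<Rightarrow> real^'n"
    and c :: "real^'n \<Rightarrow> real^'m"
    and J :: "real^'n \<Rightarrow> real^'n^'m"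
    and x v u :: "nat \<Rightarrow> real^'n"
    and alpha tau :: "nat \<Rightarrow> real"
    and tau_m1 kv sigc epst xi eta sigu kf kc kJ kr smin :: real
    and X :: "(real^'n) set"
  assumes mn: "CARD('m) \<le> CARD('n)"
    and f_deriv: "\<And>y. (f has_derivative (\<lambda>h. inner (g y) h)) (at y)"
    and g_cont: "continuous_on UNIV g"
    and c_deriv: "\<And>y. (c has_derivative (\<lambda>h. J y *v h)) (at y)"
    and J_cont: "continuous_on UNIV J"
    and r_convex: "convex_on UNIV r"
    and r_nonneg: "\<And>y. r y \<ge> 0"
    and params: "kv > 0" "0 < sigc" "sigc < 1" "0 < epst" "epst < 1" "0 < xi" "xi < 1"
       "0 < eta" "eta < 1" "0 < sigu" "sigu \<le> 1/2"
    and alpha0: "alpha 0 > 0"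
    and tau_m1: "tau_m1 > 0"
    \<comment> \<open>Step 1 (J_k^T c_k \<noteq> 0): the normal step conditions\<close>
    and step1: "\<And>k. transpose (J (x k)) *v c (x k) \<noteq> 0 \<Longrightarrow>
         (\<exists>y. v k = transpose (J (x k)) *v y)
       \<and> norm (v k) \<le> kv * alpha k * norm (transpose (J (x k)) *v c (x k))
       \<and> (\<exists>bc. 0 \<le> bc \<and> bc \<le> kv * alpha k
            \<and> (\<forall>b. 0 \<le> b \<and> b \<le> kv * alpha k \<longrightarrow>
                 (1/2) * (norm (c (x k) - bc *\<^sub>R (J (x k) *v (transpose (J (x k)) *v c (x k)))))^2
                 \<le> (1/2) * (norm (c (x k) - b *\<^sub>R (J (x k) *v (transpose (J (x k)) *v c (x k)))))^2)
            \<and> norm (c (x k) + J (x k) *v v k)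
                \<le> norm (c (x k) + J (x k) *v (- (bc *\<^sub>R (transpose (J (x k)) *v c (x k))))))"
    \<comment> \<open>Step 1 (J_k^T c_k = 0): v_k = 0, and no termination means c_k = 0\<close>
    and step1_zero: "\<And>k. transpose (J (x k)) *v c (x k) = 0 \<Longrightarrow> v k = 0 \<and> c (x k) = 0"
    \<comment> \<open>Step 2: u_k is the minimizer of the tangential subproblem\<close>
    and step2: "\<And>k. J (x k) *v u k = 0 \<and>
         (\<forall>w. J (x k) *v w = 0 \<longrightarrow>
            inner (g (x k)) (u k) + (norm (u k))^2 / (2 * alpha k) + r (x k + v k + u k)
            \<le> inner (g (x k)) w + (norm w)^2 / (2 * alpha k) + r (x k + v k + w))"
    \<comment> \<open>no finite termination in Step 2\<close>
    and s_nz: "\<And>k. v k + u k \<noteq> 0"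
    \<comment> \<open>Step 3: merit parameter update\<close>
    and step3: "\<And>k. tau k =
         (let tp = (if k = 0 then tau_m1 else tau (k - 1));
              T = tau_trial_val sigc (c (x k)) (J (x k)) (v k)
                    (Dval (g (x k)) r (sigu + 1/2) (alpha k) (x k) (v k + u k))
          in if ereal tp \<le> T then tp else min ((1 - epst) * tp) (real_of_ereal T))"
    \<comment> \<open>Step 4: acceptance test and step-size update\<close>
    and step4: "\<And>k. (if merit f r c (tau k) (x k + (v k + u k))
              \<le> merit f r c (tau k) (x k)
                 - eta * dq (g (x k)) r (alpha k) (x k) (c (x k)) (J (x k)) (v k + u k) (tau k)
         then x (Suc k) = x k + (v k + u k) \<and> alpha (Suc k) = alpha k
         else x (Suc k) = x k \<and> alpha (Suc k) = xi * alpha k)"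
    \<comment> \<open>Standing assumption\<close>
    and X_open: "open X" and X_convex: "convex X"
    and X_iter: "\<And>k. x k \<in> X \<and> x k + (v k + u k) \<in> X"
    and kpos: "kf > 0" "kc > 0" "kJ > 0" "kr > 0"
    and f_bdd: "bdd_below (f ` X)"
    and g_bd: "\<And>y. y \<in> X \<Longrightarrow> norm (g y) \<le> kf"
    and c_bd: "\<And>y. y \<in> X \<Longrightarrow> norm (c y) \<le> kc"
    and J_bd: "\<And>y. y \<in> X \<Longrightarrow> spec_norm (J y) \<le> kJ"
    and r_sub_bd: "\<And>y w. y \<in> X \<Longrightarrow> w \<in> subdiff r y \<Longrightarrow> norm w \<le> kr"
    and g_lip: "\<exists>L. L-lipschitz_on X g"
    and J_lip: "\<exists>L. L-lipschitz_on X J"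
    \<comment> \<open>uniform lower bound on the smallest singular value\<close>
    and smin_pos: "smin > 0"
    and smin_bd: "\<And>k. sigma_min_sv (J (x k)) \<ge> smin"
  shows "let K = 2 * kv * kJ * (kf + kr + (sigu + 1/2) * kc * kv * kJ);
             tmt = min ((1 - sigc) * kv * smin^2 / K) ((1 - sigc) * (smin / kJ)^2 / (K * alpha 0))
         in (\<forall>k. tau_trial_val sigc (c (x k)) (J (x k)) (v k)
                    (Dval (g (x k)) r (sigu + 1/2) (alpha k) (x k) (v k + u k)) \<ge> ereal tmt)
          \<and> (\<forall>k. tau k \<ge> min (tau 0) ((1 - epst) * tmt))"
proof -
  define tmin where "tmin = tau_trial_min sigc kv kf kr kc kJ (sigu + 1/2) smin (alpha 0)"
  define T where "T k = tau_trial_val sigc (c (x k)) (J (x k)) (v k)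
                          (Dval (g (x k)) r (sigu + 1/2) (alpha k) (x k) (v k + u k))" for k
  have alpha_step: "alpha (Suc k) = alpha k \<or> alpha (Suc k) = xi * alpha k" for k
    using step4[of k] by (auto split: if_split_asm)
  have alpha: "0 < alpha k \<and> alpha k \<le> alpha 0" for k
    using step_sizes_pos_le_initial[OF alpha0 params(6) _ alpha_step] params(7) by simp
  have trial: "ereal tmin \<le> T k" for k
    unfolding tmin_def T_def
    using X_iter[of k] alpha[of k] step1_zero[of k] step2[of k] params(10,11)
    by (intro tau_trial_min_le_tau_trial_val[OF r_convex X_open _ r_sub_bd params(1) kpos(1,4,2,3)
          _ _ params(3) _ _ g_bd c_bd J_bd smin_pos smin_bd step1]) auto
  have update: "tau (Suc k) = (if ereal (tau k) \<le> T (Suc k) then tau k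
                      else min ((1 - epst) * tau k) (real_of_ereal (T (Suc k))))" for k
    using step3[of "Suc k"] by (simp add: T_def Let_def)
  have "0 < tmin"
    unfolding tmin_def using params kpos smin_pos alpha0 by (intro tau_trial_min_pos) auto
  then have "min (tau 0) ((1 - epst) * tmin) \<le> tau k" for k
    using params(4,5) by (intro merit_parameter_ge[where tau = tau and T = T, OF update trial]) auto
  with trial show ?thesis
    unfolding tmin_def T_def tau_trial_min_def Let_def by blast
qed

end
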